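(* Let $0<q<1$ and $p\ge1$. On the spin chain with sites $-p+\tfrac12,\dots,p-\tfrac12$, consider the probability measure on $p$-element sets of down-spin positions $y_1>y_2>\dots>y_p$ given by $$\mathbb P(y_1,\dots,y_p)=\frac{q^{2\sum_{i=1}^p y_i}}{\sum_{y'_1>\dots>y'_p}q^{2\sum_i y'_i}}$$ (the squared amplitudes of the normalized ground state $\sum q^{\sum_i y_i}\Omega(y_1,\dots,y_p)$ of the half-filled sector). For $1\le l\le p$ and $0\le\delta\le p$ let $P(l,\delta)$ be the probability that $y_l=\delta-l+\tfrac12$. Then $$P(l,\delta)=q^{2l\delta}\,\frac{\begin{bmatrix}p+\delta-l\\ \delta\end{bmatrix}_{q^2}\begin{bmatrix}p-\delta+l-1\\ l-1\end{bmatrix}_{q^2}}{\begin{bmatrix}2p\\ p\end{bmatrix}_{q^2}},$$ and, for fixed $l\ge1,\delta\ge0$, as $p\to\infty$, $$P(l,\delta)\to q^{2l\delta}\frac{(q^2;q^2)_\infty}{(q^2;q^2)_{l-1}(q^2;q^2)_\delta}.$$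
   Context: $\begin{bmatrix}n\\k\end{bmatrix}_{q^2}$ denotes the Gaussian binomial coefficient in base $q^2$ (zero if $k<0$ or $k>n$), and $(a;q^2)_k=\prod_{j=0}^{k-1}(1-aq^{2j})$, $(a;q^2)_\infty=\prod_{j\ge0}(1-aq^{2j})$. *)

theory Defs
  imports "HOL-Analysis.Analysis"
begin

definition gauss_binom :: "real \<Rightarrow> nat \<Rightarrow> nat \<Rightarrow> real" where
  "gauss_binom x n k =
     (if k \<le> n then (\<Prod>j<k. (1 - x ^ (n - j)) / (1 - x ^ (j + 1))) else 0)"

definition qpoch :: "real \<Rightarrow> real \<Rightarrow> nat \<Rightarrow> real" where
  "qpoch a x k = (\<Prod>j<k. 1 - a * x ^ j)"

definition qpoch_inf :: "real \<Rightarrow> real \<Rightarrow> real" where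
  "qpoch_inf a x = (\<Prod>j. 1 - a * x ^ j)"

definition sites :: "nat \<Rightarrow> real set" where
  "sites p = {real_of_int k + 1/2 | k. - int p \<le> k \<and> k < int p}"

definition configs :: "nat \<Rightarrow> real set set" where
  "configs p = {A. A \<subseteq> sites p \<and> card A = p}"

definition ypos :: "real set \<Rightarrow> nat \<Rightarrow> real" where
  "ypos A l = rev (sorted_list_of_set A) ! (l - 1)"

definition weight :: "real \<Rightarrow> real set \<Rightarrow> real" where
  "weight q A = q powr (2 * (\<Sum>y\<in>A. y))"

definition Pld :: "real \<Rightarrow> nat \<Rightarrow> nat \<Rightarrow> nat \<Rightarrow> real" where
  "Pld q p l \<delta> =
     (\<Sum>A\<in>{A\<in>configs p. ypos A l = real \<delta> - real l + 1/2}. weight q A)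
     / (\<Sum>A\<in>configs p. weight q A)"

end

theory Submission
  imports Defs
begin

(*
  Number the sites from the left by 0, ..., 2p-1. A configuration becomes a p-subset B of
  {0..<2p}, and its weight becomes x^(sum B) with x = q^2, up to a factor depending only on p.
  The k-subsets of {0..<n} have generating function x^(k(k-1)/2) [n,k]_x (the q-Pascal rule).
  The event y_l = delta - l + 1/2 says that m = p + delta - l lies in B with exactly p - l
  elements of B below it; such B are L + {m} + U with L a (p-l)-subset of {..<m} and U an
  (l-1)-subset of {m<..<2p}, so the numerator is a product of two Gaussian binomials.
  For the limit, [n,k]_x -> 1/(x;x)_k as n -> oo and [2p,p]_x -> 1/(x;x)_oo.
*)

section \<open>Sorted lists of finite sets\<close>

lemma less_nth_sorted_list_of_set:
  fixes B :: "'a::linorder set"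
  assumes "finite B" "i < card B"
  shows "{b\<in>B. b < sorted_list_of_set B ! i} = (!) (sorted_list_of_set B) ` {..<i}"
proof -
  let ?xs = "sorted_list_of_set B"
  have sorted: "sorted_wrt (<) ?xs" and B: "set ?xs = B" "length ?xs = card B"
    using assms(1) by auto
  show ?thesis
  proof (intro set_eqI iffI)
    fix b assume "b \<in> {b\<in>B. b < ?xs ! i}"
    then have "b \<in> set ?xs" "b < ?xs ! i" using B by auto
    then obtain j where j: "j < length ?xs" "b = ?xs ! j" "b < ?xs ! i"
      by (metis in_set_conv_nth)
    have "j < i"
    proof (rule ccontr)
      assume "\<not> j < i"
      then have "?xs ! i \<le> ?xs ! j"
        using sorted_wrt_nth_less[OF sorted, of i j] j(1) by (cases "i = j") auto
      then show False using j by simp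
    qed
    then show "b \<in> (!) ?xs ` {..<i}" using j by auto
  next
    fix b assume "b \<in> (!) ?xs ` {..<i}"
    then obtain j where "j < i" "b = ?xs ! j" by auto
    then show "b \<in> {b\<in>B. b < ?xs ! i}"
      using sorted_wrt_nth_less[OF sorted, of j i] assms(2) B nth_mem[of j ?xs] by auto
  qed
qed

lemma card_less_nth_sorted_list_of_set:
  fixes B :: "'a::linorder set"
  assumes "finite B" "i < card B"
  shows "card {b\<in>B. b < sorted_list_of_set B ! i} = i"
proof -
  have "inj_on ((!) (sorted_list_of_set B)) {..<i}"
    using assms by (intro inj_onI) (simp add: nth_eq_iff_index_eq)
  then show ?thesis
    unfolding less_nth_sorted_list_of_set[OF assms] by (simp add: card_image)
qed

lemma nth_sorted_list_of_set_eq_iff: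
  fixes B :: "'a::linorder set"
  assumes "finite B" "i < card B"
  shows "sorted_list_of_set B ! i = m \<longleftrightarrow> m \<in> B \<and> card {b\<in>B. b < m} = i"
proof
  assume "sorted_list_of_set B ! i = m"
  then show "m \<in> B \<and> card {b\<in>B. b < m} = i"
    using assms card_less_nth_sorted_list_of_set nth_mem[of i "sorted_list_of_set B"] by auto
next
  assume m: "m \<in> B \<and> card {b\<in>B. b < m} = i"
  then obtain j where "j < card B" "sorted_list_of_set B ! j = m"
    using assms(1) by (metis in_set_conv_nth length_sorted_list_of_set set_sorted_list_of_set)
  then show "sorted_list_of_set B ! i = m"
    using card_less_nth_sorted_list_of_set[OF assms(1)] m by metis
qed

lemma sorted_list_of_set_image_strict_mono:
  fixes f :: "'a::linorder \<Rightarrow> 'b::linorder"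
  assumes "strict_mono f" "finite B"
  shows "sorted_list_of_set (f ` B) = map f (sorted_list_of_set B)"
proof -
  have "sorted (map f (sorted_list_of_set B))" "distinct (map f (sorted_list_of_set B))"
    using assms strict_mono_less_eq strict_mono_imp_inj_on[OF assms(1)]
    by (auto simp: sorted_wrt_map distinct_map intro: sorted_wrt_mono_rel[OF _ sorted_sorted_list_of_set])
  then show ?thesis
    using sorted_list_of_set.idem_if_sorted_distinct assms(2) by fastforce
qed

section \<open>Gaussian binomial coefficients and q-Pochhammer symbols\<close>

lemma gauss_binom_Suc_Suc:
  assumes "k \<le> n"
  shows "gauss_binom x (Suc n) (Suc k) = gauss_binom x n k * (1 - x ^ Suc n) / (1 - x ^ Suc k)"
proof -
  have shift: "(\<Prod>j<Suc k. 1 - x ^ Suc j) = (1 - x) * (\<Prod>j<k. 1 - x ^ Suc (Suc j))"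
    by (subst prod.lessThan_Suc_shift) simp
  have "gauss_binom x (Suc n) (Suc k) =
      (1 - x ^ Suc n) / (1 - x) * (\<Prod>j<k. (1 - x ^ (n - j)) / (1 - x ^ Suc (Suc j)))"
    using assms unfolding gauss_binom_def by (subst prod.lessThan_Suc_shift) simp
  also have "\<dots> = (1 - x ^ Suc n) * (\<Prod>j<k. 1 - x ^ (n - j)) / (\<Prod>j<Suc k. 1 - x ^ Suc j)"
    unfolding shift prod_dividef by simp
  also have "\<dots> = gauss_binom x n k * (1 - x ^ Suc n) / (1 - x ^ Suc k)"
    using assms by (simp add: gauss_binom_def prod_dividef)
  finally show ?thesis .
qed

lemma gauss_binom_Suc_right:
  assumes "k \<le> n"
  shows "gauss_binom x n (Suc k) = gauss_binom x n k * (1 - x ^ (n - k)) / (1 - x ^ Suc k)"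
  using assms by (simp add: gauss_binom_def)

lemma one_minus_mult_power_nonzero:
  fixes a x :: real
  assumes "\<bar>a\<bar> < 1" "\<bar>x\<bar> \<le> 1"
  shows "1 - a * x ^ n \<noteq> 0"
proof -
  have "\<bar>a * x ^ n\<bar> \<le> \<bar>a\<bar>"
    using assms by (simp add: abs_mult power_abs mult_left_le power_le_one)
  then show ?thesis using assms(1) by auto
qed

lemma qpoch_Suc: "qpoch a x (Suc n) = qpoch a x n * (1 - a * x ^ n)"
  by (simp add: qpoch_def)

lemma convergent_prod_qpoch:
  fixes a x :: real
  assumes "\<bar>x\<bar> < 1"
  shows "convergent_prod (\<lambda>j. 1 - a * x ^ j)"
proof -
  have "summable (\<lambda>j. norm ((1 - a * x ^ j) - 1))"
    using assms by (simp add: abs_mult power_abs summable_geometric)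
  then show ?thesis
    by (intro abs_convergent_prod_imp_convergent_prod summable_imp_abs_convergent_prod)
qed

lemma LIMSEQ_qpoch_inf:
  assumes "\<bar>x\<bar> < 1"
  shows "qpoch a x \<longlonglongrightarrow> qpoch_inf a x"
proof -
  have "(\<lambda>n. \<Prod>j\<le>n. 1 - a * x ^ j) \<longlonglongrightarrow> qpoch_inf a x"
    unfolding qpoch_inf_def using assms by (intro convergent_prod_LIMSEQ convergent_prod_qpoch)
  then show ?thesis
    unfolding qpoch_def[abs_def] by (subst LIMSEQ_lessThan_iff_atMost)
qed

lemma qpoch_inf_nonzero:
  assumes "\<bar>a\<bar> < 1" "\<bar>x\<bar> < 1"
  shows "qpoch_inf a x \<noteq> 0"
  unfolding qpoch_inf_def using assms one_minus_mult_power_nonzero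
  by (intro prodinf_nonzero convergent_prod_qpoch) auto

locale q_parameter =
  fixes x :: real
  assumes x: "0 < x" "x < 1"
begin

lemma one_minus_power_Suc_nonzero: "1 - x ^ Suc k \<noteq> 0"
  using one_minus_mult_power_nonzero[of x x k] x by simp

lemma qpoch_self_nonzero: "qpoch x x n \<noteq> 0"
  using one_minus_power_Suc_nonzero by (simp add: qpoch_def)

lemma gauss_binom_pascal:
  "gauss_binom x (Suc n) (Suc k) = gauss_binom x n (Suc k) + x ^ (n - k) * gauss_binom x n k"
proof (cases "k \<le> n")
  case True
  have "x ^ k * x ^ (n - k) = x ^ n"
    using True by (simp flip: power_add)
  then show ?thesis
    using one_minus_power_Suc_nonzero[of k]
    by (simp add: gauss_binom_Suc_Suc[OF True] gauss_binom_Suc_right[OF True] field_simps)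
qed (simp add: gauss_binom_def)

lemma gauss_binom_mult_qpoch:
  "gauss_binom x (k + r) k * qpoch x x k * qpoch x x r = qpoch x x (k + r)"
proof (induction k)
  case 0
  then show ?case by (simp add: gauss_binom_def qpoch_def)
next
  case (Suc k)
  have "gauss_binom x (Suc (k + r)) (Suc k) * qpoch x x (Suc k)
      = gauss_binom x (k + r) k * qpoch x x k * (1 - x ^ Suc (k + r))"
    using one_minus_power_Suc_nonzero[of k] by (simp add: gauss_binom_Suc_Suc qpoch_Suc)
  then have "gauss_binom x (Suc k + r) (Suc k) * qpoch x x (Suc k) * qpoch x x r
      = (gauss_binom x (k + r) k * qpoch x x k * qpoch x x r) * (1 - x ^ Suc (k + r))"
    by (simp add: mult_ac)
  then show ?case
    by (simp add: Suc.IH qpoch_Suc)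
qed

lemma gauss_binom_eq_qpoch:
  assumes "k \<le> n"
  shows "gauss_binom x n k = qpoch x x n / (qpoch x x k * qpoch x x (n - k))"
  using gauss_binom_mult_qpoch[of k "n - k"] assms qpoch_self_nonzero
  by (simp add: field_simps)

lemma gauss_binom_symmetric:
  assumes "k \<le> n"
  shows "gauss_binom x n k = gauss_binom x n (n - k)"
  using assms by (simp add: gauss_binom_eq_qpoch mult.commute)

lemma tendsto_gauss_binom:
  assumes "filterlim h at_top F"
  shows "((\<lambda>n. gauss_binom x (h n) k) \<longlongrightarrow> 1 / qpoch x x k) F"
proof -
  let ?Q = "qpoch_inf x x"
  have lim: "qpoch x x \<longlonglongrightarrow> ?Q"
    using x by (intro LIMSEQ_qpoch_inf) simp
  have "((\<lambda>n. qpoch x x (h n) / (qpoch x x k * qpoch x x (h n - k))) \<longlongrightarrow> ?Q / (qpoch x x k * ?Q)) F"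
    using qpoch_self_nonzero qpoch_inf_nonzero[of x x] x
    by (intro tendsto_intros filterlim_compose[OF lim assms]
        filterlim_compose[OF lim filterlim_compose[OF filterlim_minus_const_nat_at_top assms]]) auto
  moreover have "eventually (\<lambda>n. k \<le> h n) F"
    using assms by (simp add: filterlim_at_top)
  ultimately show ?thesis
    using qpoch_inf_nonzero[of x x] x
    by (auto elim!: Lim_transform_eventually eventually_mono simp: gauss_binom_eq_qpoch)
qed

lemma LIMSEQ_central_gauss_binom:
  "(\<lambda>p. gauss_binom x (2 * p) p) \<longlonglongrightarrow> 1 / qpoch_inf x x"
proof -
  let ?Q = "qpoch_inf x x"
  have lim: "qpoch x x \<longlonglongrightarrow> ?Q"
    using x by (intro LIMSEQ_qpoch_inf) simp
  have "(\<lambda>p. qpoch x x (2 * p) / (qpoch x x p * qpoch x x p)) \<longlonglongrightarrow> ?Q / (?Q * ?Q)"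
    using qpoch_inf_nonzero[of x x] x
    by (intro tendsto_intros filterlim_compose[OF lim mult_nat_left_at_top] lim) auto
  then show ?thesis
    using qpoch_inf_nonzero[of x x] x by (simp add: gauss_binom_eq_qpoch mult_2)
qed

end

section \<open>Sums over subsets of a given size\<close>

definition triangular :: "nat \<Rightarrow> nat" where
  "triangular k = (\<Sum>i<k. i)"

lemma triangular_add: "triangular (a + b) = triangular a + triangular b + a * b"
  by (induction b) (auto simp: triangular_def)

lemma triangular_rank_exponent:
  assumes "1 \<le> l" "l \<le> p"
  shows "(p + d - l) + triangular (p - l) + Suc (p + d - l) * (l - 1) + triangular (l - 1)
    = l * d + triangular p"
proof -
  have "(r + d) + triangular r + Suc (r + d) * k + triangular k = Suc k * d + triangular (r + Suc k)"
    for r k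
    using triangular_add[of r k] by (simp add: triangular_def algebra_simps)
  from this[of "p - l" "l - 1"] show ?thesis
    using assms by (simp add: Suc_diff_le)
qed

definition subsets_gf :: "real \<Rightarrow> nat set \<Rightarrow> nat \<Rightarrow> real" where
  "subsets_gf x A k = (\<Sum>B\<in>{B. B \<subseteq> A \<and> card B = k}. x ^ \<Sum>B)"

lemma subsets_gf_0:
  assumes "finite A"
  shows "subsets_gf x A 0 = 1"
proof -
  have "{B. B \<subseteq> A \<and> card B = 0} = {{}}"
    using assms by (auto dest: finite_subset[OF _ assms(1)])
  then show ?thesis by (simp add: subsets_gf_def)
qed

lemma subsets_gf_empty_Suc: "subsets_gf x {} (Suc k) = 0"
  by (simp add: subsets_gf_def)

lemma subsets_card_Suc_insert:
  assumes "finite A" "a \<notin> A"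
  shows "{B. B \<subseteq> insert a A \<and> card B = Suc k} =
    {B. B \<subseteq> A \<and> card B = Suc k} \<union> insert a ` {B. B \<subseteq> A \<and> card B = k}"
proof (intro set_eqI iffI)
  fix B assume B: "B \<in> {B. B \<subseteq> insert a A \<and> card B = Suc k}"
  then have "finite B" using assms(1) finite_subset by auto
  with B show "B \<in> {B. B \<subseteq> A \<and> card B = Suc k} \<union> insert a ` {B. B \<subseteq> A \<and> card B = k}"
    by (cases "a \<in> B") (auto intro!: image_eqI[of B _ "B - {a}"])
next
  fix B assume "B \<in> {B. B \<subseteq> A \<and> card B = Suc k} \<union> insert a ` {B. B \<subseteq> A \<and> card B = k}"
  then show "B \<in> {B. B \<subseteq> insert a A \<and> card B = Suc k}"
    using assms by (auto simp: card_insert_if finite_subset subset_iff)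
qed

lemma subsets_gf_insert:
  assumes "finite A" "a \<notin> A"
  shows "subsets_gf x (insert a A) (Suc k) = subsets_gf x A (Suc k) + x ^ a * subsets_gf x A k"
proof -
  let ?S = "\<lambda>k. {B. B \<subseteq> A \<and> card B = k}"
  have inj: "inj_on (insert a) (?S k)"
    using assms(2) by (intro inj_on_inverseI[where g = "\<lambda>B. B - {a}"]) auto
  have "(\<Sum>B\<in>insert a ` ?S k. x ^ \<Sum>B) = (\<Sum>B\<in>?S k. x ^ \<Sum>(insert a B))"
    by (simp add: sum.reindex[OF inj])
  also have "\<dots> = (\<Sum>B\<in>?S k. x ^ a * x ^ \<Sum>B)"
  proof (rule sum.cong[OF refl])
    fix B assume "B \<in> ?S k"
    then have "finite B" "a \<notin> B" using assms finite_subset by auto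
    then show "x ^ \<Sum>(insert a B) = x ^ a * x ^ \<Sum>B" by (simp add: power_add)
  qed
  finally show ?thesis
    unfolding subsets_gf_def subsets_card_Suc_insert[OF assms]
    using assms by (subst sum.union_disjoint) (auto simp: sum_distrib_left)
qed

lemma subsets_of_card_image:
  assumes "inj_on f A"
  shows "{B. B \<subseteq> f ` A \<and> card B = k} = image f ` {B. B \<subseteq> A \<and> card B = k}"
proof (intro set_eqI iffI)
  fix B assume "B \<in> {B. B \<subseteq> f ` A \<and> card B = k}"
  then obtain C where "C \<subseteq> A" "B = f ` C" "card B = k"
    by (auto simp: subset_image_iff)
  moreover have "card (f ` C) = card C"
    using inj_on_subset[OF assms \<open>C \<subseteq> A\<close>] by (rule card_image)
  ultimately show "B \<in> image f ` {B. B \<subseteq> A \<and> card B = k}" by auto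
next
  fix B assume "B \<in> image f ` {B. B \<subseteq> A \<and> card B = k}"
  then obtain C where "C \<subseteq> A" "B = f ` C" "card C = k" by auto
  moreover have "card (f ` C) = card C"
    using inj_on_subset[OF assms \<open>C \<subseteq> A\<close>] by (rule card_image)
  ultimately show "B \<in> {B. B \<subseteq> f ` A \<and> card B = k}" by auto
qed

lemma subsets_gf_shift: "subsets_gf x ((+) a ` A) k = x ^ (a * k) * subsets_gf x A k"
proof -
  let ?S = "{B. B \<subseteq> A \<and> card B = k}"
  have inj: "inj_on ((+) a) C" for C :: "nat set"
    by (simp add: inj_on_def)
  have "(\<Sum>B\<in>?S. x ^ \<Sum>((+) a ` B)) = (\<Sum>B\<in>?S. x ^ (a * k) * x ^ \<Sum>B)"
  proof (rule sum.cong[OF refl])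
    fix B assume B: "B \<in> ?S"
    have "\<Sum>((+) a ` B) = (\<Sum>b\<in>B. a + b)"
      by (rule sum.reindex[OF inj, unfolded comp_def])
    also have "\<dots> = a * k + \<Sum>B"
      using B by (simp add: sum.distrib)
    finally show "x ^ \<Sum>((+) a ` B) = x ^ (a * k) * x ^ \<Sum>B"
      by (simp add: power_add)
  qed
  moreover have "inj_on (image ((+) a)) ?S"
    using inj by (rule inj_on_image)
  ultimately show ?thesis
    unfolding subsets_gf_def subsets_of_card_image[OF inj]
    by (simp add: sum.reindex sum_distrib_left)
qed

lemma (in q_parameter) subsets_gf_lessThan:
  "subsets_gf x {..<n} k = x ^ triangular k * gauss_binom x n k"
proof (induction n arbitrary: k)
  case 0
  then show ?case
    by (cases k) (simp_all add: subsets_gf_0 subsets_gf_empty_Suc triangular_def gauss_binom_def)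
next
  case (Suc n)
  show ?case
  proof (cases k)
    case 0
    then show ?thesis by (simp add: subsets_gf_0 triangular_def gauss_binom_def)
  next
    case (Suc k')
    have shift: "x ^ n * (x ^ triangular k' * gauss_binom x n k') =
        x ^ triangular (Suc k') * (x ^ (n - k') * gauss_binom x n k')"
      by (cases "k' \<le> n") (simp_all add: gauss_binom_def triangular_def algebra_simps flip: power_add)
    have "subsets_gf x {..<Suc n} (Suc k') =
        subsets_gf x {..<n} (Suc k') + x ^ n * subsets_gf x {..<n} k'"
      by (simp add: lessThan_Suc subsets_gf_insert)
    also have "\<dots> = x ^ triangular (Suc k') * (gauss_binom x n (Suc k') + x ^ (n - k') * gauss_binom x n k')"
      unfolding Suc.IH shift distrib_left ..
    finally show ?thesis
      by (simp add: Suc gauss_binom_pascal)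
  qed
qed

lemma subsets_with_rank_eq:
  fixes m n :: nat
  assumes "m < n"
  shows "{B. B \<subseteq> {..<n} \<and> card B = r + s + 1 \<and> m \<in> B \<and> card {b\<in>B. b < m} = r} =
    (\<lambda>(L, U). insert m (L \<union> U)) ` ({L. L \<subseteq> {..<m} \<and> card L = r} \<times> {U. U \<subseteq> {m<..<n} \<and> card U = s})"
    (is "?B = ?join ` (?L \<times> ?U)")
proof (intro set_eqI iffI)
  fix B assume B: "B \<in> ?B"
  define L where "L = {b\<in>B. b < m}"
  define U where "U = {b\<in>B. m < b}"
  have split: "B = insert m (L \<union> U)" "L \<inter> U = {}" "m \<notin> L \<union> U"
    using B by (auto simp: L_def U_def not_less_iff_gr_or_eq)
  have "finite B"
    using B finite_subset by auto
  then have "finite L" "finite U"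
    by (simp_all add: L_def U_def)
  with split have "card B = card L + card U + 1"
    by (simp add: card_Un_disjoint)
  then have "(L, U) \<in> ?L \<times> ?U"
    using B by (auto simp: L_def U_def)
  then show "B \<in> ?join ` (?L \<times> ?U)"
    using split(1) by (auto intro: image_eqI)
next
  fix B assume "B \<in> ?join ` (?L \<times> ?U)"
  then obtain L U where LU: "L \<subseteq> {..<m}" "card L = r" "U \<subseteq> {m<..<n}" "card U = s"
    and B: "B = insert m (L \<union> U)" by auto
  have "finite L" "finite U"
    using LU(1,3) finite_subset by auto
  moreover have "L \<inter> U = {}" "m \<notin> L \<union> U"
    using LU(1,3) by fastforce+
  ultimately have "card B = r + s + 1"
    using LU B by (simp add: card_Un_disjoint)
  moreover have "{b\<in>B. b < m} = L"
    using LU B by fastforce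
  moreover have "B \<subseteq> {..<n}"
    using LU B assms by fastforce
  ultimately show "B \<in> ?B"
    using LU B by simp
qed

lemma sum_subsets_with_rank:
  fixes m n :: nat
  assumes "m < n"
  shows "(\<Sum>B\<in>{B. B \<subseteq> {..<n} \<and> card B = r + s + 1 \<and> m \<in> B \<and> card {b\<in>B. b < m} = r}. x ^ \<Sum>B)
    = x ^ m * subsets_gf x {..<m} r * subsets_gf x {m<..<n} s"
proof -
  let ?L = "{L. L \<subseteq> {..<m} \<and> card L = r}" and ?U = "{U. U \<subseteq> {m<..<n} \<and> card U = s}"
  let ?join = "\<lambda>(L, U). insert m (L \<union> U)"
  have inj: "inj_on ?join (?L \<times> ?U)"
    by (rule inj_on_inverseI[where g = "\<lambda>B. ({b\<in>B. b < m}, {b\<in>B. m < b})"]) auto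
  have sum_join: "\<Sum>(insert m (L \<union> U)) = m + \<Sum>L + \<Sum>U"
    if LU: "L \<subseteq> {..<m}" "U \<subseteq> {m<..<n}" for L U
  proof -
    have "finite L" "finite U"
      using LU finite_subset by auto
    moreover have "L \<inter> U = {}" "m \<notin> L \<union> U"
      using LU by fastforce+
    ultimately show ?thesis
      by (simp add: sum.union_disjoint)
  qed
  have "(\<Sum>B\<in>?join ` (?L \<times> ?U). x ^ \<Sum>B) = (\<Sum>(L, U)\<in>?L \<times> ?U. x ^ \<Sum>(insert m (L \<union> U)))"
    unfolding sum.reindex[OF inj] by (simp add: comp_def case_prod_unfold)
  also have "\<dots> = x ^ m * (\<Sum>(L, U)\<in>?L \<times> ?U. x ^ \<Sum>L * x ^ \<Sum>U)"
    unfolding sum_distrib_left by (intro sum.cong refl) (auto simp: sum_join power_add)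
  also have "(\<Sum>(L, U)\<in>?L \<times> ?U. x ^ \<Sum>L * x ^ \<Sum>U) = (\<Sum>L\<in>?L. x ^ \<Sum>L) * (\<Sum>U\<in>?U. x ^ \<Sum>U)"
    by (simp add: sum_product sum.cartesian_product)
  finally show ?thesis
    unfolding subsets_with_rank_eq[OF assms] subsets_gf_def by (simp only: mult.assoc)
qed

lemma (in q_parameter) sum_subsets_with_rank_closed:
  fixes m n :: nat
  assumes "m < n"
  shows "(\<Sum>B\<in>{B. B \<subseteq> {..<n} \<and> card B = r + s + 1 \<and> m \<in> B \<and> card {b\<in>B. b < m} = r}. x ^ \<Sum>B)
    = x ^ (m + triangular r + Suc m * s + triangular s) * gauss_binom x m r * gauss_binom x (n - Suc m) s"
proof -
  have "{m<..<n} = (+) (Suc m) ` {..<n - Suc m}"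
    unfolding lessThan_atLeast0 image_add_atLeastLessThan
    using assms by (simp add: atLeastSucLessThan_greaterThanLessThan)
  then have "subsets_gf x {m<..<n} s = x ^ (Suc m * s) * subsets_gf x {..<n - Suc m} s"
    by (simp only: subsets_gf_shift)
  then show ?thesis
    unfolding sum_subsets_with_rank[OF assms] subsets_gf_lessThan by (simp add: power_add mult_ac)
qed

section \<open>The spin chain\<close>

definition site :: "nat \<Rightarrow> nat \<Rightarrow> real" where
  "site p k = real k - real p + 1/2"

lemma strict_mono_site: "strict_mono (site p)"
  by (auto simp: strict_mono_def site_def)

lemma sites_eq_image: "sites p = site p ` {..<2 * p}"
proof (intro set_eqI iffI)
  fix y assume "y \<in> sites p"
  then obtain k where k: "y = real_of_int k + 1/2" "- int p \<le> k" "k < int p"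
    by (auto simp: sites_def)
  then have "nat (k + int p) < 2 * p" "y = site p (nat (k + int p))"
    by (auto simp: site_def)
  then show "y \<in> site p ` {..<2 * p}" by blast
next
  fix y assume "y \<in> site p ` {..<2 * p}"
  then obtain j where "j < 2 * p" "y = site p j" by auto
  then have "y = real_of_int (int j - int p) + 1/2" "- int p \<le> int j - int p" "int j - int p < int p"
    by (auto simp: site_def)
  then show "y \<in> sites p" unfolding sites_def by blast
qed

lemma configs_eq_image: "configs p = image (site p) ` {B. B \<subseteq> {..<2 * p} \<and> card B = p}"
  unfolding configs_def sites_eq_image
  by (rule subsets_of_card_image[OF strict_mono_imp_inj_on[OF strict_mono_site]])

lemma sum_configs:
  "(\<Sum>A\<in>{A\<in>configs p. P A}. f A) =
     (\<Sum>B\<in>{B. B \<subseteq> {..<2 * p} \<and> card B = p \<and> P (site p ` B)}. f (site p ` B))"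
proof -
  have "inj_on (image (site p)) {B. B \<subseteq> {..<2 * p} \<and> card B = p \<and> P (site p ` B)}"
    by (rule inj_on_image[OF strict_mono_imp_inj_on[OF strict_mono_site]])
  moreover have "{A\<in>configs p. P A} = image (site p) ` {B. B \<subseteq> {..<2 * p} \<and> card B = p \<and> P (site p ` B)}"
    unfolding configs_eq_image by blast
  ultimately show ?thesis
    by (simp add: sum.reindex)
qed

lemma weight_site_image:
  assumes "0 < q" "card B = p"
  shows "weight q (site p ` B) = q powr (real p * (1 - 2 * real p)) * (q\<^sup>2) ^ \<Sum>B"
proof -
  have "(\<Sum>y\<in>site p ` B. y) = (\<Sum>b\<in>B. real b + (1/2 - real p))"
    by (simp add: sum.reindex strict_mono_imp_inj_on[OF strict_mono_site]) (simp add: site_def algebra_simps)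
  also have "\<dots> = real (\<Sum>B) + real p * (1/2 - real p)"
    using assms(2) by (simp add: sum.distrib)
  finally have "2 * (\<Sum>y\<in>site p ` B. y) = real p * (1 - 2 * real p) + real (2 * \<Sum>B)"
    by (simp add: algebra_simps)
  then have "weight q (site p ` B) = q powr (real p * (1 - 2 * real p)) * q powr real (2 * \<Sum>B)"
    by (simp add: weight_def powr_add)
  also have "q powr real (2 * \<Sum>B) = (q\<^sup>2) ^ \<Sum>B"
    using assms(1) by (simp only: powr_realpow power_mult)
  finally show ?thesis .
qed

lemma ypos_site_image_eq_iff:
  assumes "finite B" "card B = p" "1 \<le> l" "l \<le> p"
  shows "ypos (site p ` B) l = site p m \<longleftrightarrow> m \<in> B \<and> card {b\<in>B. b < m} = p - l"
proof -
  let ?xs = "sorted_list_of_set B"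
  have "ypos (site p ` B) l = site p (?xs ! (p - l))"
    using assms by (simp add: ypos_def sorted_list_of_set_image_strict_mono[OF strict_mono_site] rev_nth)
  then have "ypos (site p ` B) l = site p m \<longleftrightarrow> ?xs ! (p - l) = m"
    by (simp add: strict_mono_eq[OF strict_mono_site])
  also have "\<dots> \<longleftrightarrow> m \<in> B \<and> card {b\<in>B. b < m} = p - l"
    using assms by (intro nth_sorted_list_of_set_eq_iff) auto
  finally show ?thesis .
qed

lemma sum_weight_configs_filter:
  assumes "0 < q"
  shows "(\<Sum>A\<in>{A\<in>configs p. P A}. weight q A) = q powr (real p * (1 - 2 * real p)) *
    (\<Sum>B\<in>{B. B \<subseteq> {..<2 * p} \<and> card B = p \<and> P (site p ` B)}. (q\<^sup>2) ^ \<Sum>B)"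
  unfolding sum_configs sum_distrib_left using assms by (intro sum.cong) (auto simp: weight_site_image)

lemma sum_weight_configs:
  assumes "0 < q" "q < 1"
  shows "(\<Sum>A\<in>configs p. weight q A) = q powr (real p * (1 - 2 * real p)) *
    ((q\<^sup>2) ^ triangular p * gauss_binom (q\<^sup>2) (2 * p) p)"
proof -
  interpret q_parameter "q\<^sup>2"
    using assms by unfold_locales (auto simp: power_less_one_iff)
  show ?thesis
    using sum_weight_configs_filter[OF assms(1), where P = "\<lambda>_. True" and p = p]
    by (simp add: subsets_gf_lessThan[symmetric] subsets_gf_def)
qed

lemma sum_weight_ypos_eq:
  assumes q: "0 < q" "q < 1" and l: "1 \<le> l" "l \<le> p" and "\<delta> \<le> p"
  shows "(\<Sum>A\<in>{A\<in>configs p. ypos A l = real \<delta> - real l + 1/2}. weight q A)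
    = q powr (real p * (1 - 2 * real p)) * ((q\<^sup>2) ^ (l * \<delta> + triangular p) *
      gauss_binom (q\<^sup>2) (p + \<delta> - l) \<delta> * gauss_binom (q\<^sup>2) (p - \<delta> + l - 1) (l - 1))"
proof -
  interpret q_parameter "q\<^sup>2"
    using q by unfold_locales (auto simp: power_less_one_iff)
  define m where "m = p + \<delta> - l"
  have m: "m < 2 * p" and card: "(p - l) + (l - 1) + 1 = p"
    using assms by (auto simp: m_def)
  have "ypos (site p ` B) l = real \<delta> - real l + 1/2 \<longleftrightarrow> m \<in> B \<and> card {b\<in>B. b < m} = p - l"
    if "B \<subseteq> {..<2 * p}" "card B = p" for B
  proof -
    have "finite B"
      using that(1) finite_subset by auto
    moreover have "real \<delta> - real l + 1/2 = site p m"
      using assms by (simp add: site_def m_def)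
    ultimately show ?thesis
      using ypos_site_image_eq_iff that(2) l by simp
  qed
  then have "{B. B \<subseteq> {..<2 * p} \<and> card B = p \<and> ypos (site p ` B) l = real \<delta> - real l + 1/2}
    = {B. B \<subseteq> {..<2 * p} \<and> card B = (p - l) + (l - 1) + 1 \<and> m \<in> B \<and> card {b\<in>B. b < m} = p - l}"
    using card by auto
  then have "(\<Sum>A\<in>{A\<in>configs p. ypos A l = real \<delta> - real l + 1/2}. weight q A)
    = q powr (real p * (1 - 2 * real p)) *
      (\<Sum>B\<in>{B. B \<subseteq> {..<2 * p} \<and> card B = (p - l) + (l - 1) + 1 \<and> m \<in> B \<and> card {b\<in>B. b < m} = p - l}.
        (q\<^sup>2) ^ \<Sum>B)"
    by (simp only: sum_weight_configs_filter[OF q(1)])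
  also have "(\<Sum>B\<in>{B. B \<subseteq> {..<2 * p} \<and> card B = (p - l) + (l - 1) + 1 \<and> m \<in> B \<and> card {b\<in>B. b < m} = p - l}.
        (q\<^sup>2) ^ \<Sum>B)
    = (q\<^sup>2) ^ (m + triangular (p - l) + Suc m * (l - 1) + triangular (l - 1))
      * gauss_binom (q\<^sup>2) m (p - l) * gauss_binom (q\<^sup>2) (2 * p - Suc m) (l - 1)"
    by (rule sum_subsets_with_rank_closed[OF m])
  also have "m + triangular (p - l) + Suc m * (l - 1) + triangular (l - 1) = l * \<delta> + triangular p"
    unfolding m_def using l by (rule triangular_rank_exponent)
  also have "gauss_binom (q\<^sup>2) m (p - l) = gauss_binom (q\<^sup>2) m \<delta>"
    using assms gauss_binom_symmetric[of "p - l" m] by (simp add: m_def)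
  also have "2 * p - Suc m = p - \<delta> + l - 1"
    using assms by (simp add: m_def)
  finally show ?thesis
    by (simp only: m_def)
qed

lemma Pld_eq:
  assumes q: "0 < q" "q < 1" and "1 \<le> l" "l \<le> p" "\<delta> \<le> p"
  shows "Pld q p l \<delta> = q ^ (2 * l * \<delta>) *
    (gauss_binom (q\<^sup>2) (p + \<delta> - l) \<delta> * gauss_binom (q\<^sup>2) (p - \<delta> + l - 1) (l - 1))
    / gauss_binom (q\<^sup>2) (2 * p) p"
proof -
  define c where "c = q powr (real p * (1 - 2 * real p))"
  define t where "t = (q\<^sup>2) ^ triangular p"
  have "c \<noteq> 0" "t \<noteq> 0"
    using q by (simp_all add: c_def t_def)
  moreover have "(q\<^sup>2) ^ (l * \<delta> + triangular p) = t * q ^ (2 * l * \<delta>)"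
    by (simp add: t_def power_add power_mult mult.assoc)
  ultimately show ?thesis
    unfolding Pld_def sum_weight_ypos_eq[OF assms] sum_weight_configs[OF q]
      c_def[symmetric] t_def[symmetric]
    by (simp add: mult.assoc)
qed

lemma LIMSEQ_Pld:
  assumes q: "0 < q" "q < 1" and l: "1 \<le> l"
  shows "(\<lambda>p. Pld q p l \<delta>) \<longlonglongrightarrow>
    q ^ (2 * l * \<delta>) * qpoch_inf (q\<^sup>2) (q\<^sup>2) / (qpoch (q\<^sup>2) (q\<^sup>2) (l - 1) * qpoch (q\<^sup>2) (q\<^sup>2) \<delta>)"
proof -
  interpret q_parameter "q\<^sup>2"
    using q by unfold_locales (auto simp: power_less_one_iff)
  let ?Q = "qpoch_inf (q\<^sup>2) (q\<^sup>2)"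
  have Q: "?Q \<noteq> 0"
    using q by (intro qpoch_inf_nonzero) (auto simp: power_less_one_iff)
  have "filterlim (\<lambda>p. p + \<delta> - l) at_top sequentially"
    by (rule filterlim_at_top_mono[OF filterlim_minus_const_nat_at_top[of l]]) (auto intro!: always_eventually)
  moreover have "filterlim (\<lambda>p. p - \<delta> + l - 1) at_top sequentially"
    by (rule filterlim_at_top_mono[OF filterlim_minus_const_nat_at_top[of \<delta>]])
      (use l in \<open>auto intro!: always_eventually\<close>)
  ultimately have "(\<lambda>p. q ^ (2 * l * \<delta>) *
      (gauss_binom (q\<^sup>2) (p + \<delta> - l) \<delta> * gauss_binom (q\<^sup>2) (p - \<delta> + l - 1) (l - 1))
      / gauss_binom (q\<^sup>2) (2 * p) p) \<longlonglongrightarrow>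
    q ^ (2 * l * \<delta>) * (1 / qpoch (q\<^sup>2) (q\<^sup>2) \<delta> * (1 / qpoch (q\<^sup>2) (q\<^sup>2) (l - 1))) / (1 / ?Q)"
    using Q by (intro tendsto_intros tendsto_gauss_binom LIMSEQ_central_gauss_binom) auto
  moreover have "eventually (\<lambda>p. q ^ (2 * l * \<delta>) *
      (gauss_binom (q\<^sup>2) (p + \<delta> - l) \<delta> * gauss_binom (q\<^sup>2) (p - \<delta> + l - 1) (l - 1))
      / gauss_binom (q\<^sup>2) (2 * p) p = Pld q p l \<delta>) sequentially"
    using eventually_ge_at_top[of "l + \<delta>"]
    by (rule eventually_mono) (rule Pld_eq[symmetric, OF q l]; simp)
  ultimately have "(\<lambda>p. Pld q p l \<delta>) \<longlonglongrightarrow>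
    q ^ (2 * l * \<delta>) * (1 / qpoch (q\<^sup>2) (q\<^sup>2) \<delta> * (1 / qpoch (q\<^sup>2) (q\<^sup>2) (l - 1))) / (1 / ?Q)"
    by (rule Lim_transform_eventually)
  then show ?thesis
    by (simp add: mult.commute)
qed

theorem mainTheorem2:
  fixes q :: real
  assumes "0 < q" and "q < 1"
  shows "(\<forall>p l \<delta>. 1 \<le> p \<longrightarrow> 1 \<le> l \<longrightarrow> l \<le> p \<longrightarrow> \<delta> \<le> p \<longrightarrow>
            Pld q p l \<delta> =
              q ^ (2 * l * \<delta>) *
              (gauss_binom (q^2) (p + \<delta> - l) \<delta> * gauss_binom (q^2) (p - \<delta> + l - 1) (l - 1))
              / gauss_binom (q^2) (2 * p) p)
       \<and> (\<forall>l \<delta>. 1 \<le> l \<longrightarrow>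
            (\<lambda>p. Pld q p l \<delta>) \<longlonglongrightarrow>
              q ^ (2 * l * \<delta>) * qpoch_inf (q^2) (q^2) / (qpoch (q^2) (q^2) (l - 1) * qpoch (q^2) (q^2) \<delta>))"
  using Pld_eq[OF assms] LIMSEQ_Pld[OF assms] by blast

end
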